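(* Let $n\ge1$ and let $\mathcal{ORCT}_n$ be the semigroup of all full contractions of $[n]=\{1,\dots,n\}$ that are either order-preserving or order-reversing. Let $\textnormal{E}(\mathcal{ORCT}_n)=\{\alpha\in\mathcal{ORCT}_n:\alpha^2=\alpha\}$ be its set of idempotents. Then $|\textnormal{E}(\mathcal{ORCT}_n)|=\frac{n(n+1)}{2}$.
   Context: $\mathcal{T}_n$ is the semigroup (under composition) of all maps $[n]\to[n]$. A map $\alpha\in\mathcal{T}_n$ is a contraction if $|x\alpha-y\alpha|\le |x-y|$ for all $x,y\in[n]$; it is order-preserving if $x\le y$ implies $x\alpha\le y\alpha$, and order-reversing if $x\le y$ implies $x\alpha\ge y\alpha$. $\mathcal{ORCT}_n$ is the set of contractions that are order-preserving or order-reversing. *)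

theory Defs
  imports "HOL-Library.FuncSet"
begin

definition full_trans :: "nat \<Rightarrow> (nat \<Rightarrow> nat) set" where
  "full_trans n = ({1..n} \<rightarrow>\<^sub>E {1..n})"

definition is_contraction :: "nat \<Rightarrow> (nat \<Rightarrow> nat) \<Rightarrow> bool" where
  "is_contraction n f \<longleftrightarrow>
     (\<forall>x\<in>{1..n}. \<forall>y\<in>{1..n}. \<bar>int (f x) - int (f y)\<bar> \<le> \<bar>int x - int y\<bar>)"

definition order_preserving :: "nat \<Rightarrow> (nat \<Rightarrow> nat) \<Rightarrow> bool" where
  "order_preserving n f \<longleftrightarrow> (\<forall>x\<in>{1..n}. \<forall>y\<in>{1..n}. x \<le> y \<longrightarrow> f x \<le> f y)"

definition order_reversing :: "nat \<Rightarrow> (nat \<Rightarrow> nat) \<Rightarrow> bool" where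
  "order_reversing n f \<longleftrightarrow> (\<forall>x\<in>{1..n}. \<forall>y\<in>{1..n}. x \<le> y \<longrightarrow> f x \<ge> f y)"

definition ORCT :: "nat \<Rightarrow> (nat \<Rightarrow> nat) set" where
  "ORCT n = {f \<in> full_trans n. is_contraction n f \<and>
                 (order_preserving n f \<or> order_reversing n f)}"

definition idempotents_ORCT :: "nat \<Rightarrow> (nat \<Rightarrow> nat) set" where
  "idempotents_ORCT n = {f \<in> ORCT n. compose {1..n} f f = f}"

end

theory Submission
  imports Defs
begin

(* An idempotent f of ORCT_n fixes a = f 1 and b = f n. If f is order-preserving, it maps
   [1,a] to a and [b,n] to b, and on [a,b] the contraction property against the two fixed
   points forces f x <= x <= f x; if f is order-reversing, then b <= a forces f a <= f b,
   so a = b and f is constant. Hence the idempotents are exactly the clamps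
   x |-> max a (min b x) with 1 <= a <= b <= n, and there are n(n+1)/2 such pairs. *)

definition clamp :: "nat \<Rightarrow> nat \<Rightarrow> nat \<Rightarrow> nat \<Rightarrow> nat" where
  "clamp n a b = restrict (\<lambda>x. max a (min b x)) {1..n}"

lemma clamp_in_idempotents_ORCT:
  assumes "1 \<le> a" "a \<le> b" "b \<le> n"
  shows "clamp n a b \<in> idempotents_ORCT n"
proof -
  have "clamp n a b \<in> full_trans n"
    using assms by (auto simp: full_trans_def clamp_def)
  moreover have "is_contraction n (clamp n a b)"
    by (auto simp: is_contraction_def clamp_def max_def min_def)
  moreover have "order_preserving n (clamp n a b)"
    by (auto simp: order_preserving_def clamp_def)
  moreover have "compose {1..n} (clamp n a b) (clamp n a b) = clamp n a b"
    using assms by (intro ext) (auto simp: compose_def clamp_def)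
  ultimately show ?thesis
    by (simp add: idempotents_ORCT_def ORCT_def)
qed

lemma clamp_eqI:
  assumes "f \<in> full_trans n" and "\<And>x. x \<in> {1..n} \<Longrightarrow> f x = max a (min b x)"
  shows "f = clamp n a b"
  using assms unfolding clamp_def full_trans_def
  by (intro extensionalityI[OF _ restrict_extensional]) (auto simp: PiE_iff)

lemma idempotent_order_preserving_contraction_eq_clamp:
  assumes f: "f \<in> full_trans n" "is_contraction n f" "order_preserving n f"
    and idem: "\<And>x. x \<in> {1..n} \<Longrightarrow> f (f x) = f x"
    and "n \<ge> 1"
  shows "f = clamp n (f 1) (f n)"
proof -
  define a where "a = f 1"
  define b where "b = f n"
  have ends: "1 \<in> {1..n}" "n \<in> {1..n}"
    using \<open>n \<ge> 1\<close> by auto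
  have mono: "f x \<le> f y" if "x \<in> {1..n}" "y \<in> {1..n}" "x \<le> y" for x y
    using f(3) that by (auto simp: order_preserving_def)
  have range: "a \<in> {1..n}" "b \<in> {1..n}"
    using f(1) ends by (auto simp: a_def b_def full_trans_def)
  have fixed: "f a = a" "f b = b"
    using idem ends by (auto simp: a_def b_def)
  have bounds: "a \<le> f x" "f x \<le> b" if "x \<in> {1..n}" for x
    using mono[of 1 x] mono[of x n] that ends by (auto simp: a_def b_def)
  have "f x = max a (min b x)" if x: "x \<in> {1..n}" for x
  proof -
    consider "x < a" | "a \<le> x" "x \<le> b" | "b < x" by linarith
    then show ?thesis
    proof cases
      case 1
      then show ?thesis
        using mono[of x a] x range fixed bounds[OF x] by auto
    next
      case 2
      have "\<bar>int (f x) - int (f a)\<bar> \<le> \<bar>int x - int a\<bar>"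
        "\<bar>int (f x) - int (f b)\<bar> \<le> \<bar>int x - int b\<bar>"
        using f(2) x range by (auto simp: is_contraction_def)
      then show ?thesis
        using 2 fixed bounds[OF x] by auto
    next
      case 3
      then show ?thesis
        using mono[of b x] x range fixed bounds[OF x] by auto
    qed
  qed
  then have "f = clamp n a b"
    by (rule clamp_eqI[OF f(1)])
  then show ?thesis
    unfolding a_def b_def .
qed

lemma idempotent_order_reversing_eq_clamp:
  assumes f: "f \<in> full_trans n" "order_reversing n f"
    and idem: "\<And>x. x \<in> {1..n} \<Longrightarrow> f (f x) = f x"
    and "n \<ge> 1"
  shows "f 1 = f n" "f = clamp n (f 1) (f n)"
proof -
  have ends: "1 \<in> {1..n}" "n \<in> {1..n}"
    using \<open>n \<ge> 1\<close> by auto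
  have anti: "f y \<le> f x" if "x \<in> {1..n}" "y \<in> {1..n}" "x \<le> y" for x y
    using f(2) that by (auto simp: order_reversing_def)
  have range: "f 1 \<in> {1..n}" "f n \<in> {1..n}"
    using f(1) ends by (auto simp: full_trans_def)
  have "f n \<le> f 1"
    using anti[OF ends] \<open>n \<ge> 1\<close> by simp
  moreover have "f (f 1) \<le> f (f n)"
    using anti[OF range(2,1) \<open>f n \<le> f 1\<close>] .
  ultimately show const: "f 1 = f n"
    using idem[OF ends(1)] idem[OF ends(2)] by simp
  show "f = clamp n (f 1) (f n)"
  proof (rule clamp_eqI[OF f(1)])
    fix x
    assume "x \<in> {1..n}"
    then have "f x = f 1"
      using anti[of 1 x] anti[of x n] ends const by simp
    then show "f x = max (f 1) (min (f n) x)"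
      using const by simp
  qed
qed

lemma idempotents_ORCT_clampE:
  assumes "f \<in> idempotents_ORCT n" and "n \<ge> 1"
  obtains a b where "1 \<le> a" "a \<le> b" "b \<le> n" "f = clamp n a b"
proof -
  have f: "f \<in> full_trans n" "is_contraction n f"
    "order_preserving n f \<or> order_reversing n f" "compose {1..n} f f = f"
    using assms(1) by (auto simp: idempotents_ORCT_def ORCT_def)
  have idem: "f (f x) = f x" if "x \<in> {1..n}" for x
    using compose_eq[OF that, of f f] f(4) by metis
  have range: "1 \<le> f 1" "f n \<le> n"
    using f(1) assms(2) by (auto simp: full_trans_def)
  from f(3) have "f 1 \<le> f n \<and> f = clamp n (f 1) (f n)"
  proof
    assume op: "order_preserving n f"
    then have "f 1 \<le> f n"
      using assms(2) by (simp add: order_preserving_def)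
    with idempotent_order_preserving_contraction_eq_clamp[OF f(1,2) op idem assms(2)]
    show ?thesis by blast
  next
    assume "order_reversing n f"
    from idempotent_order_reversing_eq_clamp[OF f(1) this idem assms(2)]
    show ?thesis by (metis order_refl)
  qed
  with range that show ?thesis
    by blast
qed

lemma idempotents_ORCT_eq_clamps:
  assumes "n \<ge> 1"
  shows "idempotents_ORCT n = (\<lambda>(b, a). clamp n a b) ` (SIGMA b:{1..n}. {1..b})"
proof
  show "(\<lambda>(b, a). clamp n a b) ` (SIGMA b:{1..n}. {1..b}) \<subseteq> idempotents_ORCT n"
    using clamp_in_idempotents_ORCT by auto
  show "idempotents_ORCT n \<subseteq> (\<lambda>(b, a). clamp n a b) ` (SIGMA b:{1..n}. {1..b})"
  proof
    fix f
    assume "f \<in> idempotents_ORCT n"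
    then obtain a b where "1 \<le> a" "a \<le> b" "b \<le> n" "f = clamp n a b"
      using idempotents_ORCT_clampE assms by blast
    then show "f \<in> (\<lambda>(b, a). clamp n a b) ` (SIGMA b:{1..n}. {1..b})"
      by (intro rev_image_eqI[of "(b, a)"]) auto
  qed
qed

lemma inj_on_clamp: "inj_on (\<lambda>(b, a). clamp n a b) (SIGMA b:{1..n}. {1..b})"
  by (rule inj_on_inverseI[where g = "\<lambda>f. (f n, f 1)"]) (auto simp: clamp_def)

theorem theorem4:
  fixes n :: nat
  assumes "n \<ge> 1"
  shows "card (idempotents_ORCT n) = n * (n + 1) div 2"
proof -
  have "card (idempotents_ORCT n) = card (SIGMA b:{1..n}. {1..b})"
    using idempotents_ORCT_eq_clamps[OF assms] inj_on_clamp by (simp add: card_image)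
  also have "\<dots> = (\<Sum>b = 1..n. b)"
    by simp
  also have "\<dots> = n * (n + 1) div 2"
    using gauss_sum_from_Suc_0[where 'a = nat] by simp
  finally show ?thesis .
qed

end
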